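(* Let $n\ge 1$. Every $X$-circuit $M$ on $n$ qubits satisfies $M\bullet(Z\otimes I\otimes\cdots\otimes I)=I\otimes\cdots\otimes I\otimes Z$.
   Context: Matrices: $X=\begin{bmatrix}0&1\\1&0\end{bmatrix}$, $Z=\begin{bmatrix}1&0\\0&-1\end{bmatrix}$, $H=\frac{1}{\sqrt2}\begin{bmatrix}1&1\\1&-1\end{bmatrix}$, $CZ=\mathrm{diag}(1,1,1,-1)$. Operators on $n$ qubits act on $(\mathbb{R}^2)^{\otimes n}$, qubit $1$ being the first tensor factor; a one-qubit gate on qubit $i$, or a two-qubit gate on qubits $i,i+1$ (with qubit $i$ the first tensor factor of the gate, called its upper qubit), denotes that matrix tensored with identities on the other qubits. For matrices $C,P$, $C\bullet P=CPC^{-1}$. A circuit is a finite sequence of gates $g_1,\dots,g_k$ ($g_1$ applied first); its operator is $g_k\cdots g_1$, and $M\bullet P$ means (operator of $M$)$\bullet P$. Derived generators (formal symbols with defining gate sequences; in a two-qubit symbol subscript $1$ is the upper, $2$ the lower qubit; ";" separates steps): $E_1$ = empty, $E_2$ = $Z$; $D_1$ = $CZ;\,H_1,H_2;\,CZ;\,H_1,H_2;\,CZ;\,H_2$; $D_2$ = $H_1;\,CZ;\,H_1,H_2;\,CZ;\,H_2$; $D_3$ = $H_1,H_2;\,CZ;\,H_1,H_2;\,CZ;\,H_2$; $D_4$ = $H_1;\,CZ;\,H_1,H_2;\,CZ;\,H_2;\,CZ$. An $X$-circuit on $n$ qubits is a sequence of symbols of the form $D_{d_1}$ on qubits $1,2$,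 then $D_{d_2}$ on qubits $2,3$, ..., then $D_{d_{n-1}}$ on qubits $n-1,n$, then $E_e$ on qubit $n$ (for $n=1$ it is just $E_e$), with $d_i\in\{1,2,3,4\}$, $e\in\{1,2\}$. *)

theory Defs
  imports Complex_Main "Jordan_Normal_Form.Gauss_Jordan_Elimination"
begin

definition Xg :: "real mat" where "Xg = mat_of_rows_list 2 [[0,1],[1,0]]"
definition Zg :: "real mat" where "Zg = mat_of_rows_list 2 [[1,0],[0,-1]]"
definition Hg :: "real mat" where
  "Hg = mat_of_rows_list 2 [[1/sqrt 2, 1/sqrt 2],[1/sqrt 2, -1/sqrt 2]]"
definition CZg :: "real mat" where
  "CZg = mat_of_rows_list 4 [[1,0,0,0],[0,1,0,0],[0,0,1,0],[0,0,0,-1]]"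

text \<open>Kronecker (tensor) product; the first argument is the first (most significant) factor.\<close>
definition kron :: "real mat \<Rightarrow> real mat \<Rightarrow> real mat" where
  "kron A B = mat (dim_row A * dim_row B) (dim_col A * dim_col B)
     (\<lambda>(i,j). A $$ (i div dim_row B, j div dim_col B) * B $$ (i mod dim_row B, j mod dim_col B))"

definition conjm :: "real mat \<Rightarrow> real mat \<Rightarrow> real mat" where
  "conjm C P = C * P * the (mat_inverse C)"

section \<open>Gates placed on n qubits (qubits numbered 1..n)\<close>

definition one_q :: "nat \<Rightarrow> nat \<Rightarrow> real mat \<Rightarrow> real mat" where
  "one_q n i G = kron (1\<^sub>m (2^(i-1))) (kron G (1\<^sub>m (2^(n-i))))"

definition two_q :: "nat \<Rightarrow> nat \<Rightarrow> real mat \<Rightarrow> real mat" where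
  "two_q n i G = kron (1\<^sub>m (2^(i-1))) (kron G (1\<^sub>m (2^(n-i-1))))"

definition circ_op :: "nat \<Rightarrow> real mat list \<Rightarrow> real mat" where
  "circ_op n gs = foldl (\<lambda>acc g. g * acc) (1\<^sub>m (2^n)) gs"

definition D_seq :: "nat \<Rightarrow> nat \<Rightarrow> nat \<Rightarrow> real mat list" where
  "D_seq n i d =
    (let CZ = two_q n i CZg; H1 = one_q n i Hg; H2 = one_q n (i+1) Hg in
     if d = 1 then [CZ, H1, H2, CZ, H1, H2, CZ, H2]
     else if d = 2 then [H1, CZ, H1, H2, CZ, H2]
     else if d = 3 then [H1, H2, CZ, H1, H2, CZ, H2]
     else [H1, CZ, H1, H2, CZ, H2, CZ])"

definition E_seq :: "nat \<Rightarrow> nat \<Rightarrow> real mat list" where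
  "E_seq n e = (if e = 1 then [] else [one_q n n Zg])"

definition xcirc_gates :: "nat \<Rightarrow> nat list \<Rightarrow> nat \<Rightarrow> real mat list" where
  "xcirc_gates n ds e = concat (map (\<lambda>k. D_seq n (k+1) (ds ! k)) [0..<n-1]) @ E_seq n e"

definition is_xcirc_param :: "nat \<Rightarrow> nat list \<Rightarrow> nat \<Rightarrow> bool" where
  "is_xcirc_param n ds e \<longleftrightarrow> length ds = n - 1 \<and> set ds \<subseteq> {1,2,3,4} \<and> e \<in> {1,2}"

end

theory Submission
  imports Defs
begin

text \<open>Track the Pauli operator Z on qubit 1 through the circuit in the Heisenberg picture: if a
gate g satisfies g P = P' g, then g conjugates P to P', and such relations compose along the gate
sequence. Inside a generator D_d the Z on the upper qubit moves through two-qubit Paulis to the Z on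
the lower qubit (for D_2: ZI, XI, XZ, ZZ, ZX, IX, IZ), using only H Z = X H, H X = Z H,
CZ (X I) = (X Z) CZ, CZ (Z X) = (I X) CZ and that CZ commutes with Z on either qubit. So the D_d
hand Z down the chain of qubits, and E_e commutes with Z on qubit n. Every gate is an involution,
hence the circuit operator U is invertible and U (Z I..I) = (I..I Z) U is the claimed conjugation.\<close>

lemma dim_kron [simp]:
  "dim_row (kron A B) = dim_row A * dim_row B"
  "dim_col (kron A B) = dim_col A * dim_col B"
  by (simp_all add: kron_def)

lemma index_kron [simp]:
  "i < dim_row A * dim_row B \<Longrightarrow> j < dim_col A * dim_col B \<Longrightarrow>
   kron A B $$ (i, j) =
     A $$ (i div dim_row B, j div dim_col B) * B $$ (i mod dim_row B, j mod dim_col B)"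
  by (simp add: kron_def)

lemma sum_lessThan_mult:
  fixes f :: "nat \<Rightarrow> 'a::comm_monoid_add"
  shows "(\<Sum>k < a * b. f k) = (\<Sum>m < a. \<Sum>l < b. f (m * b + l))"
  unfolding sum.nat_group[symmetric]
  by (simp add: sum.shift_bounds_nat_ivl[of _ 0 "_ * b" b, simplified] atLeast0LessThan add.commute)

lemma kron_mult_kron:
  assumes "dim_col A = dim_row C" "dim_col B = dim_row D"
    and "0 < dim_row B" "0 < dim_col B" "0 < dim_col D"
  shows "kron A B * kron C D = kron (A * C) (B * D)"
proof (rule eq_matI)
  fix i j assume i: "i < dim_row (kron (A * C) (B * D))" and j: "j < dim_col (kron (A * C) (B * D))"
  let ?rb = "dim_row B" and ?cb = "dim_col B" and ?cd = "dim_col D"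
  have blocks: "i div ?rb < dim_row A" "i mod ?rb < ?rb" "j div ?cd < dim_col C" "j mod ?cd < ?cd"
    using i j assms by (auto simp: less_mult_imp_div_less)
  have "(kron A B * kron C D) $$ (i, j) = (\<Sum>k < dim_col A * ?cb. kron A B $$ (i, k) * kron C D $$ (k, j))"
    using i j assms by (auto simp: scalar_prod_def lessThan_atLeast0 intro!: sum.cong)
  also have "\<dots> = (\<Sum>m < dim_col A. \<Sum>l < ?cb. kron A B $$ (i, m * ?cb + l) * kron C D $$ (m * ?cb + l, j))"
    by (rule sum_lessThan_mult)
  also have "\<dots> = (\<Sum>m < dim_col A. \<Sum>l < ?cb.
      (A $$ (i div ?rb, m) * C $$ (m, j div ?cd)) * (B $$ (i mod ?rb, l) * D $$ (l, j mod ?cd)))"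
  proof (intro sum.cong refl)
    fix m l assume m: "m \<in> {..<dim_col A}" and l: "l \<in> {..<?cb}"
    have "m * ?cb + l < (m + 1) * ?cb" using l by simp
    also have "\<dots> \<le> dim_col A * ?cb" using m by (intro mult_le_mono1) simp
    finally have "m * ?cb + l < dim_col A * ?cb" .
    moreover have "(m * ?cb + l) div ?cb = m" "(m * ?cb + l) mod ?cb = l" using l by auto
    ultimately show "kron A B $$ (i, m * ?cb + l) * kron C D $$ (m * ?cb + l, j) =
        (A $$ (i div ?rb, m) * C $$ (m, j div ?cd)) * (B $$ (i mod ?rb, l) * D $$ (l, j mod ?cd))"
      using i j assms by simp
  qed
  also have "\<dots> = (\<Sum>m < dim_col A. A $$ (i div ?rb, m) * C $$ (m, j div ?cd)) *
      (\<Sum>l < ?cb. B $$ (i mod ?rb, l) * D $$ (l, j mod ?cd))"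
    by (simp add: sum_product)
  also have "\<dots> = kron (A * C) (B * D) $$ (i, j)"
    using i j blocks assms by (simp add: scalar_prod_def lessThan_atLeast0)
  finally show "(kron A B * kron C D) $$ (i, j) = kron (A * C) (B * D) $$ (i, j)" .
qed (use assms in auto)

lemma kron_assoc:
  assumes "0 < dim_row B" "0 < dim_col B" "0 < dim_row C" "0 < dim_col C"
  shows "kron (kron A B) C = kron A (kron B C)"
proof (rule eq_matI)
  have div_mod: "k div c div b = k div (b * c)" "k div c mod b = k mod (b * c) div c"
      "k mod (b * c) mod c = k mod c" if "0 < c" for k b c :: nat
  proof -
    show "k div c div b = k div (b * c)" by (metis div_mult2_eq mult.commute)
    have "k mod (b * c) = c * (k div c mod b) + k mod c" by (metis mod_mult2_eq mult.commute)
    then show "k div c mod b = k mod (b * c) div c" using that by simp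
    show "k mod (b * c) mod c = k mod c" by (simp add: mod_mod_cancel)
  qed
  fix i j assume i: "i < dim_row (kron A (kron B C))" and j: "j < dim_col (kron A (kron B C))"
  then have "i div dim_row C < dim_row A * dim_row B" "j div dim_col C < dim_col A * dim_col B"
    by (simp_all add: less_mult_imp_div_less mult.assoc)
  then show "kron (kron A B) C $$ (i, j) = kron A (kron B C) $$ (i, j)"
    using i j assms by (simp add: div_mod mult.assoc)
qed (simp_all add: mult.assoc)

lemma kron_one_mat: "kron (1\<^sub>m a) (1\<^sub>m b) = 1\<^sub>m (a * b)"
proof (rule eq_matI)
  fix i j assume i: "i < dim_row (1\<^sub>m (a * b))" and j: "j < dim_col (1\<^sub>m (a * b))"
  then have "0 < b" "i div b < a" "j div b < a" by (auto simp: less_mult_imp_div_less intro: ccontr)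
  moreover have "(i div b = j div b \<and> i mod b = j mod b) = (i = j)"
    by (metis div_mult_mod_eq)
  ultimately show "kron (1\<^sub>m a) (1\<^sub>m b) $$ (i, j) = 1\<^sub>m (a * b) $$ (i, j)"
    using i j by auto
qed auto

lemma kron_one_mat_1_left: "kron (1\<^sub>m 1) A = A"
  by (rule eq_matI) auto

lemma kron_one_mat_1_right: "kron A (1\<^sub>m 1) = A"
  by (rule eq_matI) auto

definition embed_mat :: "nat \<Rightarrow> nat \<Rightarrow> real mat \<Rightarrow> real mat" where
  "embed_mat a b G = kron (1\<^sub>m a) (kron G (1\<^sub>m b))"

lemma embed_mat_carrier:
  "G \<in> carrier_mat k k \<Longrightarrow> embed_mat a b G \<in> carrier_mat (a * (k * b)) (a * (k * b))"
  by (intro carrier_matI) (simp_all add: embed_mat_def carrier_matD)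

lemma embed_mat_mult:
  assumes "G \<in> carrier_mat k k" "G' \<in> carrier_mat k k" "0 < k" "0 < b"
  shows "embed_mat a b G * embed_mat a b G' = embed_mat a b (G * G')"
proof -
  have "kron G (1\<^sub>m b) * kron G' (1\<^sub>m b) = kron (G * G') (1\<^sub>m b * 1\<^sub>m b)"
    by (rule kron_mult_kron) (use assms in auto)
  then have inner: "kron G (1\<^sub>m b) * kron G' (1\<^sub>m b) = kron (G * G') (1\<^sub>m b)"
    by simp
  have "embed_mat a b G * embed_mat a b G' =
      kron (1\<^sub>m a * 1\<^sub>m a) (kron G (1\<^sub>m b) * kron G' (1\<^sub>m b))"
    unfolding embed_mat_def by (rule kron_mult_kron) (use assms in auto)
  then show ?thesis by (simp add: inner embed_mat_def)
qed

lemma embed_mat_one: "embed_mat a b (1\<^sub>m k) = 1\<^sub>m (a * (k * b))"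
  by (simp add: embed_mat_def kron_one_mat)

lemma one_q_eq_embed_mat: "one_q n i = embed_mat (2^(i-1)) (2^(n-i))"
  by (simp add: fun_eq_iff one_q_def embed_mat_def)

lemma two_q_eq_embed_mat: "two_q n i = embed_mat (2^(i-1)) (2^(n-i-1))"
  by (simp add: fun_eq_iff two_q_def embed_mat_def)

lemma one_q_dim:
  assumes "1 \<le> i" "i \<le> n"
  shows "(2::nat)^(i-1) * (2 * 2^(n-i)) = 2^n"
proof -
  have "(2::nat)^n = 2^((i-1) + 1 + (n-i))" using assms by simp
  then show ?thesis by (simp add: power_add)
qed

lemma two_q_dim:
  assumes "1 \<le> i" "i + 1 \<le> n"
  shows "(2::nat)^(i-1) * (4 * 2^(n-i-1)) = 2^n"
proof -
  have "(2::nat)^n = 2^((i-1) + 2 + (n-i-1))" using assms by simp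
  then show ?thesis by (simp add: power_add)
qed

lemma one_q_carrier:
  "1 \<le> i \<Longrightarrow> i \<le> n \<Longrightarrow> G \<in> carrier_mat 2 2 \<Longrightarrow> one_q n i G \<in> carrier_mat (2^n) (2^n)"
  using embed_mat_carrier[of G 2 "2^(i-1)" "2^(n-i)"] one_q_dim[of i n] unfolding one_q_eq_embed_mat
  by metis

lemma two_q_carrier:
  "1 \<le> i \<Longrightarrow> i + 1 \<le> n \<Longrightarrow> G \<in> carrier_mat 4 4 \<Longrightarrow> two_q n i G \<in> carrier_mat (2^n) (2^n)"
  using embed_mat_carrier[of G 4 "2^(i-1)" "2^(n-i-1)"] two_q_dim[of i n] unfolding two_q_eq_embed_mat
  by metis

lemma one_q_involution:
  assumes "1 \<le> i" "i \<le> n" "G \<in> carrier_mat 2 2" "G * G = 1\<^sub>m 2"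
  shows "one_q n i G * one_q n i G = 1\<^sub>m (2^n)"
  using assms embed_mat_one[of "2^(i-1)" "2^(n-i)" 2] one_q_dim[of i n]
  by (simp add: one_q_eq_embed_mat embed_mat_mult)

lemma two_q_involution:
  assumes "1 \<le> i" "i + 1 \<le> n" "G \<in> carrier_mat 4 4" "G * G = 1\<^sub>m 4"
  shows "two_q n i G * two_q n i G = 1\<^sub>m (2^n)"
  using assms embed_mat_one[of "2^(i-1)" "2^(n-i-1)" 4] two_q_dim[of i n]
  by (simp add: two_q_eq_embed_mat embed_mat_mult)

lemma one_q_first: "one_q n 1 G = kron G (1\<^sub>m (2^(n-1)))"
  using kron_one_mat_1_left[of "kron G (1\<^sub>m (2^(n-1)))"] by (simp add: one_q_def)

lemma one_q_last: "one_q n n G = kron (1\<^sub>m (2^(n-1))) G"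
  using kron_one_mat_1_right[of G] by (simp add: one_q_def)

lemma one_q_upper:
  assumes "1 \<le> i" "i + 1 \<le> n"
  shows "one_q n i G = two_q n i (kron G (1\<^sub>m 2))"
proof -
  have "n - i = Suc (n - i - 1)" using assms by simp
  then have "(2::nat)^(n-i) = 2 * 2^(n-i-1)" by (metis power_Suc)
  then have "kron G (1\<^sub>m (2^(n-i))) = kron G (kron (1\<^sub>m 2) (1\<^sub>m (2^(n-i-1))))"
    by (simp add: kron_one_mat)
  also have "\<dots> = kron (kron G (1\<^sub>m 2)) (1\<^sub>m (2^(n-i-1)))"
    by (rule kron_assoc[symmetric]) auto
  finally show ?thesis by (simp add: one_q_def two_q_def)
qed

lemma one_q_lower:
  assumes "1 \<le> i" "i + 1 \<le> n" "G \<in> carrier_mat 2 2"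
  shows "one_q n (i + 1) G = two_q n i (kron (1\<^sub>m 2) G)"
proof -
  have "i = Suc (i - 1)" using assms by simp
  then have "(2::nat)^i = 2^(i-1) * 2" by (metis power_Suc2)
  then have "kron (1\<^sub>m (2^i)) (kron G (1\<^sub>m (2^(n-i-1)))) =
      kron (kron (1\<^sub>m (2^(i-1))) (1\<^sub>m 2)) (kron G (1\<^sub>m (2^(n-i-1))))"
    by (simp add: kron_one_mat)
  also have "\<dots> = kron (1\<^sub>m (2^(i-1))) (kron (kron (1\<^sub>m 2) G) (1\<^sub>m (2^(n-i-1))))"
    using assms by (simp add: kron_assoc)
  finally show ?thesis by (simp add: one_q_def two_q_def)
qed

lemma dim_mat_of_rows_list [simp]:
  "dim_row (mat_of_rows_list nc xs) = length xs" "dim_col (mat_of_rows_list nc xs) = nc"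
  by (simp_all add: mat_of_rows_list_def)

lemma index_mat_of_rows_list [simp]:
  "i < length xs \<Longrightarrow> j < nc \<Longrightarrow> mat_of_rows_list nc xs $$ (i, j) = xs ! i ! j"
  by (simp add: mat_of_rows_list_def)

lemma mat4_eqI:
  assumes "dim_row A = 4" "dim_col A = 4" "dim_row B = 4" "dim_col B = 4"
    and "\<forall>i \<in> {0,1,2,3}. \<forall>j \<in> {0,1,2,3}. A $$ (i, j) = B $$ (i, j)"
  shows "A = B"
proof (rule eq_matI)
  fix i j assume "i < dim_row B" "j < dim_col B"
  then have "i \<in> {0,1,2,3}" "j \<in> {0,1,2,3}" using assms(3,4) by auto
  then show "A $$ (i, j) = B $$ (i, j)" using assms(5) by blast
qed (use assms in auto)

lemma index_mult_mat4:
  fixes A B :: "'a::comm_semiring_0 mat"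
  assumes "dim_col A = 4" "dim_row B = 4" "i < dim_row A" "j < dim_col B"
  shows "(A * B) $$ (i, j) =
    A $$ (i, 0) * B $$ (0, j) + A $$ (i, 1) * B $$ (1, j) +
    A $$ (i, 2) * B $$ (2, j) + A $$ (i, 3) * B $$ (3, j)"
  using assms by (simp add: scalar_prod_def numeral_eq_Suc atLeast0_lessThan_Suc algebra_simps)

lemma Hg_carrier: "Hg \<in> carrier_mat 2 2"
  by (rule carrier_matI; simp add: Hg_def)+

lemma Zg_carrier: "Zg \<in> carrier_mat 2 2"
  by (rule carrier_matI; simp add: Zg_def)+

lemma dim_Hg_Zg [simp]: "dim_row Hg = 2" "dim_col Hg = 2" "dim_row Zg = 2" "dim_col Zg = 2"
  using Hg_carrier Zg_carrier by auto

lemma index_Hg: "i < 2 \<Longrightarrow> j < 2 \<Longrightarrow> Hg $$ (i, j) = [[1/sqrt 2, 1/sqrt 2], [1/sqrt 2, -1/sqrt 2]] ! i ! j"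
  by (simp add: Hg_def)

lemma index_Zg: "i < 2 \<Longrightarrow> j < 2 \<Longrightarrow> Zg $$ (i, j) = [[1, 0], [0, -1]] ! i ! j"
  by (simp add: Zg_def)

lemma Zg_involutive: "Zg * Zg = 1\<^sub>m 2"
proof (rule eq_matI)
  fix i j assume "i < dim_row (1\<^sub>m 2 :: real mat)" "j < dim_col (1\<^sub>m 2 :: real mat)"
  then have "i \<in> {0, 1}" "j \<in> {0, 1}" by auto
  then show "(Zg * Zg) $$ (i, j) = 1\<^sub>m 2 $$ (i, j)"
    by (auto simp: scalar_prod_def index_Zg numeral_2_eq_2)
qed auto

text \<open>Two-qubit operators, named by their tensor factors (upper qubit first).\<close>

definition H_I :: "real mat" where
  "H_I = mat_of_rows_list 4
    [[1/sqrt 2, 0, 1/sqrt 2, 0], [0, 1/sqrt 2, 0, 1/sqrt 2],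
     [1/sqrt 2, 0, -1/sqrt 2, 0], [0, 1/sqrt 2, 0, -1/sqrt 2]]"

definition I_H :: "real mat" where
  "I_H = mat_of_rows_list 4
    [[1/sqrt 2, 1/sqrt 2, 0, 0], [1/sqrt 2, -1/sqrt 2, 0, 0],
     [0, 0, 1/sqrt 2, 1/sqrt 2], [0, 0, 1/sqrt 2, -1/sqrt 2]]"

definition Z_I :: "real mat" where
  "Z_I = mat_of_rows_list 4 [[1,0,0,0], [0,1,0,0], [0,0,-1,0], [0,0,0,-1]]"

definition I_Z :: "real mat" where
  "I_Z = mat_of_rows_list 4 [[1,0,0,0], [0,-1,0,0], [0,0,1,0], [0,0,0,-1]]"

definition X_I :: "real mat" where
  "X_I = mat_of_rows_list 4 [[0,0,1,0], [0,0,0,1], [1,0,0,0], [0,1,0,0]]"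

definition I_X :: "real mat" where
  "I_X = mat_of_rows_list 4 [[0,1,0,0], [1,0,0,0], [0,0,0,1], [0,0,1,0]]"

definition X_Z :: "real mat" where
  "X_Z = mat_of_rows_list 4 [[0,0,1,0], [0,0,0,-1], [1,0,0,0], [0,-1,0,0]]"

definition Z_Z :: "real mat" where
  "Z_Z = mat_of_rows_list 4 [[1,0,0,0], [0,-1,0,0], [0,0,-1,0], [0,0,0,1]]"

definition Z_X :: "real mat" where
  "Z_X = mat_of_rows_list 4 [[0,1,0,0], [1,0,0,0], [0,0,0,-1], [0,0,-1,0]]"

lemmas two_qubit_defs = H_I_def I_H_def Z_I_def I_Z_def X_I_def I_X_def X_Z_def Z_Z_def Z_X_def CZg_def

lemma two_qubit_carrier:
  "H_I \<in> carrier_mat 4 4" "I_H \<in> carrier_mat 4 4" "CZg \<in> carrier_mat 4 4"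
  "Z_I \<in> carrier_mat 4 4" "I_Z \<in> carrier_mat 4 4" "X_I \<in> carrier_mat 4 4" "I_X \<in> carrier_mat 4 4"
  "X_Z \<in> carrier_mat 4 4" "Z_Z \<in> carrier_mat 4 4" "Z_X \<in> carrier_mat 4 4"
  by (rule carrier_matI; simp add: two_qubit_defs)+

lemma two_qubit_gates_involutive: "H_I * H_I = 1\<^sub>m 4" "I_H * I_H = 1\<^sub>m 4" "CZg * CZg = 1\<^sub>m 4"
  unfolding two_qubit_defs by (rule mat4_eqI; simp add: index_mult_mat4 del: index_mult_mat(1))+

lemma pauli_conjugations:
  "CZg * Z_I = Z_I * CZg" "H_I * Z_I = X_I * H_I" "I_H * X_I = X_I * I_H"
  "CZg * X_I = X_Z * CZg" "H_I * X_Z = Z_Z * H_I" "I_H * Z_Z = Z_X * I_H"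
  "CZg * Z_X = I_X * CZg" "I_H * I_X = I_Z * I_H" "CZg * I_Z = I_Z * CZg"
  unfolding two_qubit_defs by (rule mat4_eqI; simp add: index_mult_mat4 del: index_mult_mat(1))+

lemma kron_single_qubit_gates:
  "kron Hg (1\<^sub>m 2) = H_I" "kron (1\<^sub>m 2) Hg = I_H" "kron Zg (1\<^sub>m 2) = Z_I" "kron (1\<^sub>m 2) Zg = I_Z"
  unfolding two_qubit_defs by (rule mat4_eqI; simp add: index_Hg index_Zg)+

lemma one_q_as_two_q:
  assumes "1 \<le> i" "i + 1 \<le> n"
  shows "one_q n i Hg = two_q n i H_I" "one_q n (i + 1) Hg = two_q n i I_H"
    "one_q n i Zg = two_q n i Z_I" "one_q n (i + 1) Zg = two_q n i I_Z"
  using one_q_upper[OF assms] one_q_lower[OF assms] Hg_carrier Zg_carrier kron_single_qubit_gates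
  by simp_all

inductive propagates :: "nat \<Rightarrow> real mat \<Rightarrow> real mat list \<Rightarrow> real mat \<Rightarrow> bool" where
  Nil: "P \<in> carrier_mat N N \<Longrightarrow> propagates N P [] P"
| Cons: "g * P = P' * g \<Longrightarrow> g \<in> carrier_mat N N \<Longrightarrow> P \<in> carrier_mat N N \<Longrightarrow>
    propagates N P' gs Q \<Longrightarrow> propagates N P (g # gs) Q"

lemma propagates_carrier: "propagates N P gs Q \<Longrightarrow> P \<in> carrier_mat N N"
  by (induction rule: propagates.induct) auto

lemma propagates_append:
  "propagates N P gs Q \<Longrightarrow> propagates N Q hs R \<Longrightarrow> propagates N P (gs @ hs) R"
  by (induction rule: propagates.induct) (auto intro: propagates.Cons)

lemma propagates_embed_mat:
  assumes "propagates k P gs Q" "0 < k" "0 < b"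
  shows "propagates (a * (k * b)) (embed_mat a b P) (map (embed_mat a b) gs) (embed_mat a b Q)"
  using assms
proof (induction rule: propagates.induct)
  case (Nil P N)
  then show ?case by (auto intro: propagates.Nil embed_mat_carrier)
next
  case (Cons g P P' N gs Q)
  have P': "P' \<in> carrier_mat N N" using Cons.hyps(4) by (rule propagates_carrier)
  have "embed_mat a b g * embed_mat a b P = embed_mat a b (P' * g)"
    using Cons by (simp add: embed_mat_mult)
  also have "\<dots> = embed_mat a b P' * embed_mat a b g"
    using Cons P' by (simp add: embed_mat_mult)
  finally have "embed_mat a b g * embed_mat a b P = embed_mat a b P' * embed_mat a b g" .
  then show ?case
    using Cons by (auto intro: propagates.Cons embed_mat_carrier)
qed

lemma propagates_two_q:
  assumes "propagates 4 P gs Q" "1 \<le> i" "i + 1 \<le> n"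
  shows "propagates (2^n) (two_q n i P) (map (two_q n i) gs) (two_q n i Q)"
  using propagates_embed_mat[OF assms(1), of "2^(n-i-1)" "2^(i-1)"] two_q_dim[OF assms(2,3)]
  by (simp add: two_q_eq_embed_mat)

lemma propagates_foldl:
  assumes "propagates N P gs Q" "A \<in> carrier_mat N N" "R \<in> carrier_mat N N" "A * R = P * A"
  shows "foldl (\<lambda>U g. g * U) A gs * R = Q * foldl (\<lambda>U g. g * U) A gs"
  using assms
proof (induction arbitrary: A rule: propagates.induct)
  case (Nil P N)
  then show ?case by simp
next
  case (Cons g P P' N gs Q)
  have P': "P' \<in> carrier_mat N N" using Cons.hyps(4) by (rule propagates_carrier)
  have "g * A * R = g * (P * A)"
    using Cons by (metis assoc_mult_mat)
  also have "\<dots> = P' * g * A"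
    using Cons by (metis assoc_mult_mat)
  also have "\<dots> = P' * (g * A)"
    using Cons P' by (metis assoc_mult_mat)
  finally show ?case
    using Cons by (simp add: Cons.IH)
qed

lemma involution_Units:
  fixes g :: "'a::semiring_1 mat"
  shows "g \<in> carrier_mat N N \<Longrightarrow> g * g = 1\<^sub>m N \<Longrightarrow> g \<in> Units (ring_mat TYPE('a) N b)"
  by (auto simp: Units_def ring_mat_def)

lemma foldl_mult_Units:
  fixes A :: "'a::comm_ring_1 mat"
  assumes "\<forall>g \<in> set gs. g \<in> Units (ring_mat TYPE('a) N b)" "A \<in> Units (ring_mat TYPE('a) N b)"
  shows "foldl (\<lambda>U g. g * U) A gs \<in> Units (ring_mat TYPE('a) N b)"
  using assms
proof (induction gs arbitrary: A)
  case (Cons g gs)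
  interpret ring "ring_mat TYPE('a) N b" by (rule ring_mat)
  have "g * A \<in> Units (ring_mat TYPE('a) N b)"
    using Units_m_closed[of g A] Cons.prems by (simp add: ring_mat_simps)
  then show ?case using Cons by simp
qed simp

lemma conjm_eqI:
  assumes "U \<in> Units (ring_mat TYPE(real) N b)" "P \<in> carrier_mat N N" "Q \<in> carrier_mat N N"
    and "U * P = Q * U"
  shows "conjm U P = Q"
proof -
  have U: "U \<in> carrier_mat N N" using assms(1) by (simp add: Units_def ring_mat_def)
  obtain V where V: "mat_inverse U = Some V"
    using mat_inverse(1)[OF U] assms(1) by fastforce
  then have UV: "U * V = 1\<^sub>m N" "V \<in> carrier_mat N N" using mat_inverse(2)[OF U] by auto
  have "conjm U P = Q * U * V" using assms(4) V by (simp add: conjm_def)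
  also have "\<dots> = Q * (U * V)" using assms(3) U UV(2) by (rule assoc_mult_mat)
  also have "\<dots> = Q" using UV assms(3) by simp
  finally show ?thesis .
qed

definition D_gates :: "nat \<Rightarrow> real mat list" where
  "D_gates d =
    (if d = 1 then [CZg, H_I, I_H, CZg, H_I, I_H, CZg, I_H]
     else if d = 2 then [H_I, CZg, H_I, I_H, CZg, I_H]
     else if d = 3 then [H_I, I_H, CZg, H_I, I_H, CZg, I_H]
     else [H_I, CZg, H_I, I_H, CZg, I_H, CZg])"

lemma D_gates_propagate: "propagates 4 Z_I (D_gates d) I_Z"
  unfolding D_gates_def
  by (auto intro!: pauli_conjugations[THEN propagates.Cons] propagates.Nil simp: two_qubit_carrier)

lemma D_seq_eq_map_two_q:
  assumes "1 \<le> i" "i + 1 \<le> n"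
  shows "D_seq n i d = map (two_q n i) (D_gates d)"
  unfolding D_seq_def Let_def one_q_as_two_q[OF assms] by (simp add: D_gates_def)

lemma D_seq_propagates:
  assumes "1 \<le> i" "i + 1 \<le> n"
  shows "propagates (2^n) (one_q n i Zg) (D_seq n i d) (one_q n (i + 1) Zg)"
  unfolding D_seq_eq_map_two_q[OF assms] one_q_as_two_q[OF assms]
  by (rule propagates_two_q[OF D_gates_propagate assms])

lemma xcirc_gates_propagate:
  assumes "1 \<le> n"
  shows "propagates (2^n) (one_q n 1 Zg) (xcirc_gates n ds e) (one_q n n Zg)"
proof -
  have Z1: "one_q n 1 Zg \<in> carrier_mat (2^n) (2^n)" and Zn: "one_q n n Zg \<in> carrier_mat (2^n) (2^n)"
    using assms by (auto intro: one_q_carrier Zg_carrier)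
  have D_part: "propagates (2^n) (one_q n 1 Zg)
      (concat (map (\<lambda>k. D_seq n (k + 1) (ds ! k)) [0..<m])) (one_q n (m + 1) Zg)"
    if "m \<le> n - 1" for m
    using that
  proof (induction m)
    case 0
    then show ?case using propagates.Nil[OF Z1] by simp
  next
    case (Suc m)
    then show ?case using D_seq_propagates[of "m + 1" n] by (auto intro: propagates_append)
  qed
  have "propagates (2^n) (one_q n n Zg) (E_seq n e) (one_q n n Zg)"
    using Zn by (auto simp: E_seq_def intro: propagates.Nil propagates.Cons)
  then show ?thesis
    using D_part[of "n - 1"] assms unfolding xcirc_gates_def by (auto intro: propagates_append)
qed

lemma xcirc_gates_involutive:
  assumes "1 \<le> n" "g \<in> set (xcirc_gates n ds e)"
  shows "g \<in> carrier_mat (2^n) (2^n) \<and> g * g = 1\<^sub>m (2^n)"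
proof -
  from assms(2) consider k where "k < n - 1" "g \<in> set (D_seq n (k + 1) (ds ! k))"
    | "g \<in> set (E_seq n e)"
    unfolding xcirc_gates_def by auto
  then show ?thesis
  proof cases
    case 1
    then have "g \<in> two_q n (k + 1) ` {H_I, I_H, CZg}"
      by (auto simp: D_seq_eq_map_two_q D_gates_def split: if_splits)
    then show ?thesis
      using 1 two_qubit_carrier two_qubit_gates_involutive
      by (auto intro: two_q_carrier two_q_involution)
  next
    case 2
    then show ?thesis
      using assms(1)
      by (auto simp: E_seq_def intro: one_q_carrier one_q_involution Zg_carrier Zg_involutive
          split: if_splits)
  qed
qed

theorem proposition4p13:
  fixes n :: nat and ds :: "nat list" and e :: nat
  assumes "n \<ge> 1" and "is_xcirc_param n ds e"
  shows "conjm (circ_op n (xcirc_gates n ds e)) (kron Zg (1\<^sub>m (2^(n-1))))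
           = kron (1\<^sub>m (2^(n-1))) Zg"
proof -
  let ?U = "circ_op n (xcirc_gates n ds e)"
  have Z1: "one_q n 1 Zg \<in> carrier_mat (2^n) (2^n)" and Zn: "one_q n n Zg \<in> carrier_mat (2^n) (2^n)"
    using assms(1) by (auto intro: one_q_carrier Zg_carrier)
  have "?U * one_q n 1 Zg = one_q n n Zg * ?U"
    unfolding circ_op_def
    using propagates_foldl[OF xcirc_gates_propagate[OF assms(1)] one_carrier_mat Z1] Z1 by simp
  moreover have "?U \<in> Units (ring_mat TYPE(real) (2^n) ())"
    unfolding circ_op_def
    using xcirc_gates_involutive[OF assms(1)]
    by (intro foldl_mult_Units ballI involution_Units) auto
  ultimately have "conjm ?U (one_q n 1 Zg) = one_q n n Zg"
    using Z1 Zn by (intro conjm_eqI)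
  then show ?thesis unfolding one_q_first one_q_last .
qed

end
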